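(* Let $d$ be a positive integer and $H$ a complex Hilbert space. Let $T=(T_1,\ldots,T_d)$ and $\tilde T=(\tilde T_1,\ldots,\tilde T_d)$ be two commuting operator-valued multishifts on $\ell^2_H(\mathbb N^d)$ with respective unitary operator weights $\{A^{(j)}_\alpha:\alpha\in\mathbb N^d,\ j=1,\ldots,d\}$ and $\{\tilde A^{(j)}_\alpha:\alpha\in\mathbb N^d,\ j=1,\ldots,d\}$. Then $T$ and $\tilde T$ are unitarily equivalent, i.e. there is a unitary $U$ on $\ell^2_H(\mathbb N^d)$ with $UT_jU^*=\tilde T_j$ for all $j=1,\ldots,d$.
   Context: $\mathbb N$ denotes the nonnegative integers; $\varepsilon_j\in\mathbb N^d$ has $1$ in the $j$-th place and $0$ elsewhere. $\ell^2_H(\mathbb N^d)=\bigoplus_{\alpha\in\mathbb N^d}H$ is the orthogonal direct sum of copies of $H$ indexed by $\mathbb N^d$. Given bounded operators $A^{(j)}_\alpha:H\to H$ ($\alpha\in\mathbb N^d$, $j=1,\ldots,d$), the operator-valued multishift with these operator weights is the $d$-tuple $T=(T_1,\ldots,T_d)$ defined by $T_j(\oplus_\alpha x_\alpha)=\oplus_\alpha A^{(j)}_{\alpha-\varepsilon_j}x_{\alpha-\varepsilon_j}$, where the term is interpreted as $0$ when $\alpha_j=0$ (with domain $\{x:\sum_\alpha\|A^{(j)}_\alpha x_\alpha\|^2<\infty\}$). It is called a commuting operator-valued multishift if $\sup_{\alpha}\|A^{(j)}_\alpha\|<\infty$ for each $j$ and $A^{(i)}_{\alpha+\varepsilon_j}A^{(j)}_\alpha=A^{(j)}_{\alpha+\varepsilon_i}A^{(i)}_\alpha$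 for all $\alpha\in\mathbb N^d$ and $i,j=1,\ldots,d$. *)

theory Defs
  imports "HOL-Analysis.Analysis"
begin

definition hnorm :: "('h \<Rightarrow> 'h \<Rightarrow> complex) \<Rightarrow> 'h \<Rightarrow> real" where
  "hnorm ip x = sqrt (Re (ip x x))"

definition complex_hilbert_space ::
  "(complex \<Rightarrow> 'h::ab_group_add \<Rightarrow> 'h) \<Rightarrow> ('h \<Rightarrow> 'h \<Rightarrow> complex) \<Rightarrow> bool" where
  "complex_hilbert_space sc ip \<longleftrightarrow>
     vector_space sc \<and>
     (\<forall>x y. ip x y = cnj (ip y x)) \<and>
     (\<forall>x y z. ip (x + y) z = ip x z + ip y z) \<and>
     (\<forall>c x y. ip (sc c x) y = c * ip x y) \<and>
     (\<forall>x. Im (ip x x) = 0 \<and> 0 \<le> Re (ip x x)) \<and>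
     (\<forall>x. ip x x = 0 \<longrightarrow> x = 0) \<and>
     (\<forall>X :: nat \<Rightarrow> 'h. (\<forall>e>0. \<exists>N. \<forall>m\<ge>N. \<forall>n\<ge>N. hnorm ip (X m - X n) < e)
          \<longrightarrow> (\<exists>L. (\<lambda>n. hnorm ip (X n - L)) \<longlonglongrightarrow> 0))"

definition bounded_op ::
  "(complex \<Rightarrow> 'h::ab_group_add \<Rightarrow> 'h) \<Rightarrow> ('h \<Rightarrow> 'h \<Rightarrow> complex) \<Rightarrow> ('h \<Rightarrow> 'h) \<Rightarrow> bool" where
  "bounded_op sc ip T \<longleftrightarrow> Vector_Spaces.linear sc sc T \<and>
     (\<exists>K. \<forall>x. hnorm ip (T x) \<le> K * hnorm ip x)"

definition unitary_op ::
  "(complex \<Rightarrow> 'h::ab_group_add \<Rightarrow> 'h) \<Rightarrow> ('h \<Rightarrow> 'h \<Rightarrow> complex) \<Rightarrow> ('h \<Rightarrow> 'h) \<Rightarrow> bool" where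
  "unitary_op sc ip U \<longleftrightarrow> bounded_op sc ip U \<and>
     (\<exists>V. bounded_op sc ip V \<and> (\<forall>x y. ip (U x) y = ip x (V y)) \<and>
          U \<circ> V = id \<and> V \<circ> U = id)"

text \<open>Multi-indices in N^d are functions 'd \<Rightarrow> nat for a finite type 'd with CARD('d) = d.\<close>

definition eps :: "'d \<Rightarrow> 'd \<Rightarrow> nat" where
  "eps j = (\<lambda>i. if i = j then 1 else 0)"

definition idx_add :: "('d \<Rightarrow> nat) \<Rightarrow> ('d \<Rightarrow> nat) \<Rightarrow> 'd \<Rightarrow> nat" where
  "idx_add \<alpha> \<beta> = (\<lambda>i. \<alpha> i + \<beta> i)"

definition idx_sub :: "('d \<Rightarrow> nat) \<Rightarrow> ('d \<Rightarrow> nat) \<Rightarrow> 'd \<Rightarrow> nat" where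
  "idx_sub \<alpha> \<beta> = (\<lambda>i. \<alpha> i - \<beta> i)"

definition l2 :: "('h \<Rightarrow> 'h \<Rightarrow> complex) \<Rightarrow> (('d \<Rightarrow> nat) \<Rightarrow> 'h) set" where
  "l2 ip = {x. (\<lambda>\<alpha>. (hnorm ip (x \<alpha>))\<^sup>2) summable_on UNIV}"

definition l2_inner :: "('h \<Rightarrow> 'h \<Rightarrow> complex) \<Rightarrow> (('d \<Rightarrow> nat) \<Rightarrow> 'h) \<Rightarrow> (('d \<Rightarrow> nat) \<Rightarrow> 'h) \<Rightarrow> complex" where
  "l2_inner ip x y = (\<Sum>\<^sub>\<infinity>\<alpha>. ip (x \<alpha>) (y \<alpha>))"

definition l2_norm :: "('h \<Rightarrow> 'h \<Rightarrow> complex) \<Rightarrow> (('d \<Rightarrow> nat) \<Rightarrow> 'h) \<Rightarrow> real" where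
  "l2_norm ip x = sqrt (Re (l2_inner ip x x))"

definition l2_scale :: "(complex \<Rightarrow> 'h \<Rightarrow> 'h) \<Rightarrow> complex \<Rightarrow> (('d \<Rightarrow> nat) \<Rightarrow> 'h) \<Rightarrow> ('d \<Rightarrow> nat) \<Rightarrow> 'h" where
  "l2_scale sc c x = (\<lambda>\<alpha>. sc c (x \<alpha>))"

definition l2_unitary ::
  "(complex \<Rightarrow> 'h::ab_group_add \<Rightarrow> 'h) \<Rightarrow> ('h \<Rightarrow> 'h \<Rightarrow> complex)
   \<Rightarrow> ((('d \<Rightarrow> nat) \<Rightarrow> 'h) \<Rightarrow> (('d \<Rightarrow> nat) \<Rightarrow> 'h))
   \<Rightarrow> ((('d \<Rightarrow> nat) \<Rightarrow> 'h) \<Rightarrow> (('d \<Rightarrow> nat) \<Rightarrow> 'h)) \<Rightarrow> bool" where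
  "l2_unitary sc ip U V \<longleftrightarrow>
     U ` l2 ip \<subseteq> l2 ip \<and> V ` l2 ip \<subseteq> l2 ip \<and>
     (\<forall>x\<in>l2 ip. \<forall>y\<in>l2 ip. U (\<lambda>\<alpha>. x \<alpha> + y \<alpha>) = (\<lambda>\<alpha>. U x \<alpha> + U y \<alpha>) \<and> V (\<lambda>\<alpha>. x \<alpha> + y \<alpha>) = (\<lambda>\<alpha>. V x \<alpha> + V y \<alpha>)) \<and>
     (\<forall>c. \<forall>x\<in>l2 ip. U (l2_scale sc c x) = l2_scale sc c (U x) \<and>
                    V (l2_scale sc c x) = l2_scale sc c (V x)) \<and>
     (\<exists>K. \<forall>x\<in>l2 ip. l2_norm ip (U x) \<le> K * l2_norm ip x) \<and>
     (\<forall>x\<in>l2 ip. \<forall>y\<in>l2 ip. l2_inner ip (U x) y = l2_inner ip x (V y)) \<and>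
     (\<forall>x\<in>l2 ip. U (V x) = x \<and> V (U x) = x)"

text \<open>Operator-valued multishift: A j \<alpha> is the weight A^{(j)}_\<alpha>.
  (T_j x)_\<alpha> = A^{(j)}_{\<alpha>-\<epsilon>_j} x_{\<alpha>-\<epsilon>_j}, and 0 if \<alpha>_j = 0.\<close>

definition multishift :: "('d \<Rightarrow> ('d \<Rightarrow> nat) \<Rightarrow> 'h \<Rightarrow> 'h::zero) \<Rightarrow> 'd
    \<Rightarrow> (('d \<Rightarrow> nat) \<Rightarrow> 'h) \<Rightarrow> ('d \<Rightarrow> nat) \<Rightarrow> 'h" where
  "multishift A j x = (\<lambda>\<alpha>. if \<alpha> j = 0 then 0
       else A j (idx_sub \<alpha> (eps j)) (x (idx_sub \<alpha> (eps j))))"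

definition commuting_op_multishift ::
  "(complex \<Rightarrow> 'h::ab_group_add \<Rightarrow> 'h) \<Rightarrow> ('h \<Rightarrow> 'h \<Rightarrow> complex)
   \<Rightarrow> ('d \<Rightarrow> ('d \<Rightarrow> nat) \<Rightarrow> 'h \<Rightarrow> 'h) \<Rightarrow> bool" where
  "commuting_op_multishift sc ip A \<longleftrightarrow>
     (\<forall>j \<alpha>. bounded_op sc ip (A j \<alpha>)) \<and>
     (\<forall>j. \<exists>K. \<forall>\<alpha> x. hnorm ip (A j \<alpha> x) \<le> K * hnorm ip x) \<and>
     (\<forall>i j \<alpha>. A i (idx_add \<alpha> (eps j)) \<circ> A j \<alpha> = A j (idx_add \<alpha> (eps i)) \<circ> A i \<alpha>)"

end

theory Submission
  imports Defs
begin

text \<open>Let W_\<alpha> be the product of the weights met along a monotone lattice path from 0 to \<alpha>.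
  The commutation relations say exactly that W_\<alpha> does not depend on the path, so
  W_\<alpha> = A^(j)_(\<alpha>-\<epsilon>_j) W_(\<alpha>-\<epsilon>_j) whenever \<alpha>_j > 0. With unitary weights every W_\<alpha> is
  unitary, and the diagonal unitary U = \<Oplus>_\<alpha> W~_\<alpha> W_\<alpha>^* built from both families of
  weights then satisfies U T_j U^* = T~_j.\<close>

definition unitary_with_adjoint ::
  "(complex \<Rightarrow> 'h::ab_group_add \<Rightarrow> 'h) \<Rightarrow> ('h \<Rightarrow> 'h \<Rightarrow> complex) \<Rightarrow> ('h \<Rightarrow> 'h) \<Rightarrow> ('h \<Rightarrow> 'h) \<Rightarrow> bool"
where
  "unitary_with_adjoint sc ip D E \<longleftrightarrow>
     (\<forall>u v. D (u + v) = D u + D v) \<and> (\<forall>c u. D (sc c u) = sc c (D u)) \<and>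
     (\<forall>u v. E (u + v) = E u + E v) \<and> (\<forall>c u. E (sc c u) = sc c (E u)) \<and>
     (\<forall>u v. ip (D u) v = ip u (E v)) \<and> (\<forall>u. D (E u) = u) \<and> (\<forall>u. E (D u) = u)"

lemma unitary_with_adjoint_id: "unitary_with_adjoint sc ip id id"
  unfolding unitary_with_adjoint_def by simp

lemma unitary_with_adjoint_comp:
  "unitary_with_adjoint sc ip D1 E1 \<Longrightarrow> unitary_with_adjoint sc ip D2 E2 \<Longrightarrow>
   unitary_with_adjoint sc ip (D1 \<circ> D2) (E2 \<circ> E1)"
  unfolding unitary_with_adjoint_def by simp

lemma unitary_with_adjoint_swap:
  "\<forall>x y. ip x y = cnj (ip y x) \<Longrightarrow> unitary_with_adjoint sc ip D E \<Longrightarrow> unitary_with_adjoint sc ip E D"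
  unfolding unitary_with_adjoint_def by metis

lemma unitary_with_adjoint_inner_self:
  "unitary_with_adjoint sc ip D E \<Longrightarrow> ip (D u) (D u) = ip u u"
  unfolding unitary_with_adjoint_def by metis

lemma unitary_with_adjoint_inner_self_adjoint:
  "unitary_with_adjoint sc ip D E \<Longrightarrow> ip (E u) (E u) = ip u u"
  unfolding unitary_with_adjoint_def by metis

lemma unitary_with_adjoint_zero: "unitary_with_adjoint sc ip D E \<Longrightarrow> D 0 = 0"
  unfolding unitary_with_adjoint_def by (metis add_cancel_right_right)

lemma unitary_op_obtains_adjoint:
  assumes "unitary_op sc ip D"
  obtains E where "unitary_with_adjoint sc ip D E"
  using assms unfolding unitary_op_def bounded_op_def unitary_with_adjoint_def Vector_Spaces.linear_iff
  by (metis comp_apply id_apply)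

lemma l2_unitary_diagonal:
  assumes DE: "\<And>\<alpha>. unitary_with_adjoint sc ip (D \<alpha>) (E \<alpha>)"
  shows "l2_unitary sc ip (\<lambda>x \<alpha>. D \<alpha> (x \<alpha>)) (\<lambda>x \<alpha>. E \<alpha> (x \<alpha>))"
proof -
  have hnorm_D: "hnorm ip (D \<alpha> u) = hnorm ip u" and hnorm_E: "hnorm ip (E \<alpha> u) = hnorm ip u" for \<alpha> u
    unfolding hnorm_def
    by (simp_all add: unitary_with_adjoint_inner_self[OF DE] unitary_with_adjoint_inner_self_adjoint[OF DE])
  have l2_norm_D: "l2_norm ip (\<lambda>\<alpha>. D \<alpha> (x \<alpha>)) = l2_norm ip x" for x
    unfolding l2_norm_def l2_inner_def by (simp add: unitary_with_adjoint_inner_self[OF DE])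
  show ?thesis
    unfolding l2_unitary_def
  proof (intro conjI ballI allI exI[of _ 1])
    show "(\<lambda>x \<alpha>. D \<alpha> (x \<alpha>)) ` l2 ip \<subseteq> l2 ip" "(\<lambda>x \<alpha>. E \<alpha> (x \<alpha>)) ` l2 ip \<subseteq> l2 ip"
      unfolding l2_def by (auto simp: hnorm_D hnorm_E)
  qed (use DE in \<open>simp_all add: unitary_with_adjoint_def l2_scale_def l2_inner_def l2_norm_D\<close>)
qed

lemma idx_add_sub_eps: "0 < \<alpha> j \<Longrightarrow> idx_add (idx_sub \<alpha> (eps j)) (eps j) = \<alpha>"
  unfolding idx_add_def idx_sub_def eps_def by auto

lemma idx_sub_eps_other: "j \<noteq> k \<Longrightarrow> idx_sub \<alpha> (eps k) j = \<alpha> j"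
  unfolding idx_sub_def eps_def by auto

lemma idx_sub_eps_commute:
  "idx_sub (idx_sub \<alpha> (eps j)) (eps k) = idx_sub (idx_sub \<alpha> (eps k)) (eps j)"
  unfolding idx_sub_def eps_def by auto

lemma sum_idx_sub_eps:
  fixes \<alpha> :: "'d::finite \<Rightarrow> nat"
  assumes "0 < \<alpha> j"
  shows "sum \<alpha> UNIV = Suc (sum (idx_sub \<alpha> (eps j)) UNIV)"
proof -
  have "sum \<alpha> UNIV = sum (idx_add (idx_sub \<alpha> (eps j)) (eps j)) UNIV"
    by (simp add: idx_add_sub_eps[of \<alpha> j, OF assms])
  also have "\<dots> = sum (idx_sub \<alpha> (eps j)) UNIV + 1"
    by (simp add: idx_add_def sum.distrib eps_def)
  finally show ?thesis by simp
qed

text \<open>The path descends along an arbitrarily chosen positive coordinate; by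
  \<open>path_weight_step\<close> the choice does not matter.\<close>

function path_weight :: "('d::finite \<Rightarrow> ('d \<Rightarrow> nat) \<Rightarrow> 'h \<Rightarrow> 'h) \<Rightarrow> ('d \<Rightarrow> nat) \<Rightarrow> 'h \<Rightarrow> 'h" where
  "path_weight A \<alpha> = (if \<forall>i. \<alpha> i = 0 then id else
     (let k = SOME k. 0 < \<alpha> k in A k (idx_sub \<alpha> (eps k)) \<circ> path_weight A (idx_sub \<alpha> (eps k))))"
  by auto
termination
proof (relation "Wellfounded.measure (\<lambda>(A, \<alpha>). sum \<alpha> UNIV)")
  fix A :: "'d::finite \<Rightarrow> ('d \<Rightarrow> nat) \<Rightarrow> 'h \<Rightarrow> 'h" and \<alpha> :: "'d \<Rightarrow> nat" and k
  assume "\<not> (\<forall>i. \<alpha> i = 0)" and k: "k = (SOME k. 0 < \<alpha> k)"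
  then have "0 < \<alpha> k"
    by (auto intro: someI)
  then show "((A, idx_sub \<alpha> (eps k)), (A, \<alpha>)) \<in> Wellfounded.measure (\<lambda>(A, \<alpha>). sum \<alpha> UNIV)"
    using sum_idx_sub_eps[of \<alpha> k] by simp
qed simp

declare path_weight.simps [simp del]

lemma path_weight_zero: "\<forall>i. \<alpha> i = 0 \<Longrightarrow> path_weight A \<alpha> = id"
  by (simp add: path_weight.simps)

lemma path_weight_unfold:
  assumes "0 < \<alpha> j"
  defines "k \<equiv> SOME k. 0 < \<alpha> k"
  shows "0 < \<alpha> k"
    and "path_weight A \<alpha> = A k (idx_sub \<alpha> (eps k)) \<circ> path_weight A (idx_sub \<alpha> (eps k))"
proof -
  show "0 < \<alpha> k"
    unfolding k_def using assms(1) by (rule someI)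
  show "path_weight A \<alpha> = A k (idx_sub \<alpha> (eps k)) \<circ> path_weight A (idx_sub \<alpha> (eps k))"
    using assms(1) by (subst path_weight.simps) (auto simp: k_def Let_def)
qed

lemma path_weight_step:
  fixes A :: "'d::finite \<Rightarrow> ('d \<Rightarrow> nat) \<Rightarrow> 'h \<Rightarrow> 'h"
  assumes comm: "\<And>i j \<beta>. A i (idx_add \<beta> (eps j)) \<circ> A j \<beta> = A j (idx_add \<beta> (eps i)) \<circ> A i \<beta>"
    and "0 < \<alpha> j"
  shows "path_weight A \<alpha> = A j (idx_sub \<alpha> (eps j)) \<circ> path_weight A (idx_sub \<alpha> (eps j))"
  using \<open>0 < \<alpha> j\<close>
proof (induction \<alpha> arbitrary: j rule: measure_induct_rule[where f = "\<lambda>\<alpha>. sum \<alpha> UNIV"])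
  case (less \<alpha>)
  define k where "k = (SOME k. 0 < \<alpha> k)"
  have "0 < \<alpha> k" and path_k: "path_weight A \<alpha> = A k (idx_sub \<alpha> (eps k)) \<circ> path_weight A (idx_sub \<alpha> (eps k))"
    using path_weight_unfold(1)[of \<alpha> j, OF less.prems] path_weight_unfold(2)[of \<alpha> j A, OF less.prems]
    by (simp_all add: k_def)
  show ?case
  proof (cases "j = k")
    case True
    with path_k show ?thesis by simp
  next
    case False
    \<comment> \<open>Both paths pass through \<open>\<gamma> = \<alpha> - \<epsilon>\<^sub>j - \<epsilon>\<^sub>k\<close>; the last two steps are swapped by \<open>comm\<close>.\<close>
    define \<gamma> where "\<gamma> = idx_sub (idx_sub \<alpha> (eps k)) (eps j)"
    have j_pos: "0 < idx_sub \<alpha> (eps k) j" and k_pos: "0 < idx_sub \<alpha> (eps j) k"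
      using False less.prems \<open>0 < \<alpha> k\<close> by (simp_all add: idx_sub_eps_other)
    have \<gamma>_j: "idx_add \<gamma> (eps j) = idx_sub \<alpha> (eps k)" and \<gamma>_k: "idx_add \<gamma> (eps k) = idx_sub \<alpha> (eps j)"
      unfolding \<gamma>_def using idx_add_sub_eps[of "idx_sub \<alpha> (eps k)" j, OF j_pos]
        idx_add_sub_eps[of "idx_sub \<alpha> (eps j)" k, OF k_pos]
      by (simp_all add: idx_sub_eps_commute[of \<alpha> k j])
    have smaller_k: "sum (idx_sub \<alpha> (eps k)) UNIV < sum \<alpha> UNIV"
      and smaller_j: "sum (idx_sub \<alpha> (eps j)) UNIV < sum \<alpha> UNIV"
      using sum_idx_sub_eps[of \<alpha> k] sum_idx_sub_eps[of \<alpha> j] \<open>0 < \<alpha> k\<close> less.prems by simp_all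
    have path_kj: "path_weight A (idx_sub \<alpha> (eps k)) = A j \<gamma> \<circ> path_weight A \<gamma>"
      unfolding \<gamma>_def by (rule less.IH[OF smaller_k j_pos])
    have path_jk: "path_weight A (idx_sub \<alpha> (eps j)) = A k \<gamma> \<circ> path_weight A \<gamma>"
      unfolding \<gamma>_def idx_sub_eps_commute[of \<alpha> k j] by (rule less.IH[OF smaller_j k_pos])
    have "path_weight A \<alpha> = (A k (idx_add \<gamma> (eps j)) \<circ> A j \<gamma>) \<circ> path_weight A \<gamma>"
      using path_k path_kj \<gamma>_j by (simp add: comp_assoc)
    also have "\<dots> = (A j (idx_add \<gamma> (eps k)) \<circ> A k \<gamma>) \<circ> path_weight A \<gamma>"
      by (simp add: comm)
    also have "\<dots> = A j (idx_sub \<alpha> (eps j)) \<circ> path_weight A (idx_sub \<alpha> (eps j))"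
      using path_jk \<gamma>_k by (simp add: comp_assoc)
    finally show ?thesis .
  qed
qed

lemma path_weight_unitary:
  assumes "\<And>j \<beta>. unitary_op sc ip (A j \<beta>)"
  shows "\<exists>E. unitary_with_adjoint sc ip (path_weight A \<alpha>) E"
  using assms
proof (induction A \<alpha> rule: path_weight.induct)
  case (1 A \<alpha>)
  show ?case
  proof (cases "\<forall>i. \<alpha> i = 0")
    case True
    then show ?thesis
      using path_weight_zero unitary_with_adjoint_id by metis
  next
    case False
    then obtain j where "0 < \<alpha> j"
      by auto
    define k where "k = (SOME k. 0 < \<alpha> k)"
    obtain E where "unitary_with_adjoint sc ip (path_weight A (idx_sub \<alpha> (eps k))) E"
      using "1" False k_def by blast
    moreover obtain F where "unitary_with_adjoint sc ip (A k (idx_sub \<alpha> (eps k))) F"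
      using "1.prems" unitary_op_obtains_adjoint by metis
    ultimately show ?thesis
      using path_weight_unfold(2)[of \<alpha> j A, OF \<open>0 < \<alpha> j\<close>, folded k_def] unitary_with_adjoint_comp
      by metis
  qed
qed

lemma path_weight_ratio_intertwines:
  fixes A At :: "'d::finite \<Rightarrow> ('d \<Rightarrow> nat) \<Rightarrow> 'h::ab_group_add \<Rightarrow> 'h"
  assumes comm: "\<And>i j \<beta>. A i (idx_add \<beta> (eps j)) \<circ> A j \<beta> = A j (idx_add \<beta> (eps i)) \<circ> A i \<beta>"
    and comm_t: "\<And>i j \<beta>. At i (idx_add \<beta> (eps j)) \<circ> At j \<beta> = At j (idx_add \<beta> (eps i)) \<circ> At i \<beta>"
    and inv: "\<And>\<alpha>. unitary_with_adjoint sc ip (path_weight A \<alpha>) (Winv \<alpha>)"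
    and "0 < \<alpha> j"
  defines "\<beta> \<equiv> idx_sub \<alpha> (eps j)"
  shows "(path_weight At \<alpha> \<circ> Winv \<alpha>) \<circ> A j \<beta> = At j \<beta> \<circ> (path_weight At \<beta> \<circ> Winv \<beta>)"
proof -
  have "Winv \<alpha> (A j \<beta> v) = Winv \<beta> v" for v
  proof -
    have "A j \<beta> v = path_weight A \<alpha> (Winv \<beta> v)"
      using path_weight_step[where A = A and \<alpha> = \<alpha> and j = j, OF comm \<open>0 < \<alpha> j\<close>] inv[of \<beta>]
      by (simp add: \<beta>_def unitary_with_adjoint_def)
    then show ?thesis
      using inv[of \<alpha>] by (simp add: unitary_with_adjoint_def)
  qed
  then show ?thesis
    using path_weight_step[where A = At and \<alpha> = \<alpha> and j = j, OF comm_t \<open>0 < \<alpha> j\<close>] by (auto simp: \<beta>_def)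
qed

lemma diagonal_intertwines_multishift:
  assumes DE: "\<And>\<alpha>. unitary_with_adjoint sc ip (D \<alpha>) (E \<alpha>)"
    and intertwine: "\<And>\<alpha>. 0 < \<alpha> j \<Longrightarrow>
      D \<alpha> \<circ> A j (idx_sub \<alpha> (eps j)) = At j (idx_sub \<alpha> (eps j)) \<circ> D (idx_sub \<alpha> (eps j))"
  shows "(\<lambda>\<alpha>. D \<alpha> (multishift A j (\<lambda>\<beta>. E \<beta> (x \<beta>)) \<alpha>)) = multishift At j x"
proof
  fix \<alpha>
  show "D \<alpha> (multishift A j (\<lambda>\<beta>. E \<beta> (x \<beta>)) \<alpha>) = multishift At j x \<alpha>"
  proof (cases "\<alpha> j = 0")
    case True
    then show ?thesis
      by (simp add: multishift_def unitary_with_adjoint_zero[OF DE])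
  next
    case False
    define \<beta> where "\<beta> = idx_sub \<alpha> (eps j)"
    have "D \<alpha> (A j \<beta> (E \<beta> (x \<beta>))) = At j \<beta> (D \<beta> (E \<beta> (x \<beta>)))"
      using fun_cong[OF intertwine] False by (simp add: \<beta>_def)
    also have "\<dots> = At j \<beta> (x \<beta>)"
      using DE by (simp add: unitary_with_adjoint_def)
    finally show ?thesis
      using False by (simp add: multishift_def \<beta>_def)
  qed
qed

theorem lemma3p2:
  fixes sc :: "complex \<Rightarrow> 'h::ab_group_add \<Rightarrow> 'h"
    and ip :: "'h \<Rightarrow> 'h \<Rightarrow> complex"
    and A At :: "'d::finite \<Rightarrow> ('d \<Rightarrow> nat) \<Rightarrow> 'h \<Rightarrow> 'h"
  assumes "complex_hilbert_space sc ip"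
    and "commuting_op_multishift sc ip A"
    and "commuting_op_multishift sc ip At"
    and "\<forall>j \<alpha>. unitary_op sc ip (A j \<alpha>)"
    and "\<forall>j \<alpha>. unitary_op sc ip (At j \<alpha>)"
  shows "\<exists>U V. l2_unitary sc ip U V \<and>
           (\<forall>j. \<forall>x\<in>l2 ip. U (multishift A j (V x)) = multishift At j x)"
proof -
  have conj_sym: "\<forall>x y. ip x y = cnj (ip y x)"
    using assms(1) unfolding complex_hilbert_space_def by (elim conjE) assumption
  have "\<forall>i j \<beta>. A i (idx_add \<beta> (eps j)) \<circ> A j \<beta> = A j (idx_add \<beta> (eps i)) \<circ> A i \<beta>"
    using assms(2) unfolding commuting_op_multishift_def by (elim conjE) assumption
  note comm = this[rule_format]
  have "\<forall>i j \<beta>. At i (idx_add \<beta> (eps j)) \<circ> At j \<beta> = At j (idx_add \<beta> (eps i)) \<circ> At i \<beta>"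
    using assms(3) unfolding commuting_op_multishift_def by (elim conjE) assumption
  note comm_t = this[rule_format]
  obtain Winv where Winv: "\<And>\<alpha>. unitary_with_adjoint sc ip (path_weight A \<alpha>) (Winv \<alpha>)"
    using path_weight_unitary[where A = A] assms(4) by metis
  obtain Winv_t where Winv_t: "\<And>\<alpha>. unitary_with_adjoint sc ip (path_weight At \<alpha>) (Winv_t \<alpha>)"
    using path_weight_unitary[where A = At] assms(5) by metis
  define D where "D \<alpha> = path_weight At \<alpha> \<circ> Winv \<alpha>" for \<alpha>
  define E where "E \<alpha> = path_weight A \<alpha> \<circ> Winv_t \<alpha>" for \<alpha>
  have DE: "unitary_with_adjoint sc ip (D \<alpha>) (E \<alpha>)" for \<alpha>
    unfolding D_def E_def
    using unitary_with_adjoint_comp[OF Winv_t[of \<alpha>] unitary_with_adjoint_swap[OF conj_sym Winv[of \<alpha>]]] .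
  have "l2_unitary sc ip (\<lambda>x \<alpha>. D \<alpha> (x \<alpha>)) (\<lambda>x \<alpha>. E \<alpha> (x \<alpha>))"
    using DE by (rule l2_unitary_diagonal)
  moreover have "(\<lambda>\<alpha>. D \<alpha> (multishift A j (\<lambda>\<beta>. E \<beta> (x \<beta>)) \<alpha>)) = multishift At j x" for j x
    using DE unfolding D_def
    by (rule diagonal_intertwines_multishift) (rule path_weight_ratio_intertwines[OF comm comm_t Winv])
  ultimately show ?thesis
    by blast
qed

end
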